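(* Consider the $64$ constraints (subsets of the six conditions $C_{in}^{\rightarrow},C_{in}^{\leftarrow},C_{out}^{\rightarrow},C_{out}^{\leftarrow},C_{undec}^{\rightarrow},C_{undec}^{\leftarrow}$). Then: (a) every constraint of cardinality $0$, $1$ or $2$ is weak; (b) among the $20$ constraints of cardinality $3$, exactly $\{C_{in}^{\rightarrow},C_{out}^{\rightarrow},C_{undec}^{\rightarrow}\}$ and $\{C_{in}^{\leftarrow},C_{out}^{\leftarrow},C_{undec}^{\leftarrow}\}$ are correct and non-redundant, and the other $18$ are weak; (c) among the $15$ constraints of cardinality $4$, $\{C_{in}^{\rightarrow},C_{in}^{\leftarrow},C_{out}^{\rightarrow},C_{out}^{\leftarrow}\}$, $\{C_{out}^{\rightarrow},C_{out}^{\leftarrow},C_{undec}^{\rightarrow},C_{undec}^{\leftarrow}\}$ and $\{C_{in}^{\rightarrow},C_{in}^{\leftarrow},C_{undec}^{\rightarrow},C_{undec}^{\leftarrow}\}$ are correct and non-redundant, the six constraints $\{C_{undec}^{\rightarrow},C_{undec}^{\leftarrow},C_{in}^{\rightarrow},C_{out}^{\leftarrow}\}$, $\{C_{undec}^{\rightarrow},C_{undec}^{\leftarrow},C_{in}^{\leftarrow},C_{out}^{\rightarrow}\}$, $\{C_{out}^{\rightarrow},C_{out}^{\leftarrow},C_{in}^{\rightarrow},C_{undec}^{\leftarrow}\}$, $\{C_{out}^{\rightarrow},C_{out}^{\leftarrow},C_{in}^{\leftarrow},C_{undec}^{\rightarrow}\}$, $\{C_{in}^{\rightarrow},C_{in}^{\leftarrow},C_{out}^{\rightarrow},C_{undec}^{\leftarrow}\}$,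 $\{C_{in}^{\rightarrow},C_{in}^{\leftarrow},C_{out}^{\leftarrow},C_{undec}^{\rightarrow}\}$ are weak, and the remaining $6$ are redundant; (d) every constraint of cardinality $5$ or $6$ is redundant.
   Context: An argumentation framework is a pair $(\mathcal{A},\mathcal{R})$ with $\mathcal{A}$ a finite set of arguments and $\mathcal{R}\subseteq\mathcal{A}\times\mathcal{A}$ (self-attacks allowed); $a^{-}=\{b:(b,a)\in\mathcal{R}\}$. For a total function $\mathcal{L}ab:\mathcal{A}\to\{\mathtt{in},\mathtt{out},\mathtt{undec}\}$ and an argument $a$, define the six conditions: $C_{in}^{\rightarrow}$: $\mathcal{L}ab(a)=\mathtt{in}\Rightarrow \forall b\in a^-\ \mathcal{L}ab(b)=\mathtt{out}$; $C_{in}^{\leftarrow}$: $(\forall b\in a^-\ \mathcal{L}ab(b)=\mathtt{out})\Rightarrow \mathcal{L}ab(a)=\mathtt{in}$; $C_{out}^{\rightarrow}$: $\mathcal{L}ab(a)=\mathtt{out}\Rightarrow \exists b\in a^-\ \mathcal{L}ab(b)=\mathtt{in}$; $C_{out}^{\leftarrow}$: $(\exists b\in a^-\ \mathcal{L}ab(b)=\mathtt{in})\Rightarrow \mathcal{L}ab(a)=\mathtt{out}$; $C_{undec}^{\rightarrow}$: $\mathcal{L}ab(a)=\mathtt{undec}\Rightarrow (\forall b\in a^-\ \mathcal{L}ab(b)\neq\mathtt{in}\ \wedge\ \exists c\in a^-\ \mathcal{L}ab(c)=\mathtt{undec})$; $C_{undec}^{\leftarrow}$: $(\forall b\in a^-\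 \mathcal{L}ab(b)\neq\mathtt{in}\ \wedge\ \exists c\in a^-\ \mathcal{L}ab(c)=\mathtt{undec})\Rightarrow \mathcal{L}ab(a)=\mathtt{undec}$. $\mathcal{L}ab$ is a complete labelling iff it satisfies all six conditions for every $a\in\mathcal{A}$. A constraint is any subset of these six conditions; a labelling satisfies a constraint if it satisfies each condition in it for every argument. A constraint is: weak if there exist a finite argumentation framework and a total labelling satisfying it that is not complete; correct if, for every finite argumentation framework, the total labellings satisfying it are exactly the complete labellings; correct and non-redundant if it is correct and every strict subset of it is weak; redundant if it is correct and some strict subset of it is correct. *)

theory Defs
  imports Main
begin

datatype label = In | Out | Undec

text \<open>The six conditions: Cin-> , Cin<- , Cout-> , Cout<- , Cundec-> , Cundec<- .\<close>
datatype cond = InTo | InFrom | OutTo | OutFrom | UndecTo | UndecFrom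

lemma UNIV_cond: "(UNIV :: cond set) = {InTo, InFrom, OutTo, OutFrom, UndecTo, UndecFrom}"
  by (auto intro: cond.exhaust)

instance cond :: finite
  by standard (simp add: UNIV_cond)

text \<open>Arguments are drawn from nat; an argumentation framework is a finite set A of
  arguments with an attack relation R on A. A labelling is a function on arguments
  (only its values on A matter).\<close>

definition attackers :: "(nat \<times> nat) set \<Rightarrow> nat \<Rightarrow> nat set" where
  "attackers R a = {b. (b, a) \<in> R}"

fun sat_cond :: "(nat \<times> nat) set \<Rightarrow> (nat \<Rightarrow> label) \<Rightarrow> cond \<Rightarrow> nat \<Rightarrow> bool" where
  "sat_cond R L InTo a = (L a = In \<longrightarrow> (\<forall>b\<in>attackers R a. L b = Out))"
| "sat_cond R L InFrom a = ((\<forall>b\<in>attackers R a. L b = Out) \<longrightarrow> L a = In)"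
| "sat_cond R L OutTo a = (L a = Out \<longrightarrow> (\<exists>b\<in>attackers R a. L b = In))"
| "sat_cond R L OutFrom a = ((\<exists>b\<in>attackers R a. L b = In) \<longrightarrow> L a = Out)"
| "sat_cond R L UndecTo a = (L a = Undec \<longrightarrow>
      ((\<forall>b\<in>attackers R a. L b \<noteq> In) \<and> (\<exists>c\<in>attackers R a. L c = Undec)))"
| "sat_cond R L UndecFrom a = (((\<forall>b\<in>attackers R a. L b \<noteq> In) \<and> (\<exists>c\<in>attackers R a. L c = Undec))
      \<longrightarrow> L a = Undec)"

definition is_AF :: "nat set \<Rightarrow> (nat \<times> nat) set \<Rightarrow> bool" where
  "is_AF A R \<longleftrightarrow> finite A \<and> R \<subseteq> A \<times> A"

definition satisfies :: "nat set \<Rightarrow> (nat \<times> nat) set \<Rightarrow> (nat \<Rightarrow> label) \<Rightarrow> cond set \<Rightarrow> bool" where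
  "satisfies A R L C \<longleftrightarrow> (\<forall>c\<in>C. \<forall>a\<in>A. sat_cond R L c a)"

definition complete_lab :: "nat set \<Rightarrow> (nat \<times> nat) set \<Rightarrow> (nat \<Rightarrow> label) \<Rightarrow> bool" where
  "complete_lab A R L \<longleftrightarrow> satisfies A R L UNIV"

definition weak :: "cond set \<Rightarrow> bool" where
  "weak C \<longleftrightarrow> (\<exists>A R L. is_AF A R \<and> satisfies A R L C \<and> \<not> complete_lab A R L)"

definition correct :: "cond set \<Rightarrow> bool" where
  "correct C \<longleftrightarrow> (\<forall>A R L. is_AF A R \<longrightarrow> (satisfies A R L C \<longleftrightarrow> complete_lab A R L))"

definition correct_nonredundant :: "cond set \<Rightarrow> bool" where
  "correct_nonredundant C \<longleftrightarrow> correct C \<and> (\<forall>C'. C' \<subset> C \<longrightarrow> weak C')"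

definition redundant :: "cond set \<Rightarrow> bool" where
  "redundant C \<longleftrightarrow> correct C \<and> (\<exists>C'. C' \<subset> C \<and> correct C')"

end

theory Submission
  imports Defs
begin

text \<open>Call the label that its attackers force on an argument its legal label: in if all
  attackers are out, out if some attacker is in, undec otherwise. Each condition only relates the
  actual label l to the legal label s (e.g. Cin-> says l = in implies s = in), and a labelling is
  complete iff l = s everywhere. Since both l and s take exactly one of three values, l = s follows
  from the three forward conditions, from the three backward ones, and from any two of the three
  biconditionals. Every constraint containing none of these five lies below one of six constraints,
  each refuted by a framework with at most two arguments. As correctness is upward closed, the
  classification is then a finite check.\<close>

lemma weak_iff_not_correct: "weak C \<longleftrightarrow> \<not> correct C"
  unfolding weak_def correct_def complete_lab_def satisfies_def by blast

lemma weak_antimono: "weak C \<Longrightarrow> C' \<subseteq> C \<Longrightarrow> weak C'"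
  unfolding weak_def satisfies_def by blast

lemma correct_mono: "correct C' \<Longrightarrow> C' \<subseteq> C \<Longrightarrow> correct C"
  using weak_antimono weak_iff_not_correct by blast

lemma proper_subset_iff_below_deletion: "C' \<subset> C \<longleftrightarrow> (\<exists>x\<in>C. C' \<subseteq> C - {x})"
  by blast

lemma correct_nonredundant_iff:
  "correct_nonredundant C \<longleftrightarrow> correct C \<and> (\<forall>x\<in>C. \<not> correct (C - {x}))"
  unfolding correct_nonredundant_def proper_subset_iff_below_deletion weak_iff_not_correct
  using correct_mono by blast

lemma redundant_iff: "redundant C \<longleftrightarrow> correct C \<and> (\<exists>x\<in>C. correct (C - {x}))"
  unfolding redundant_def proper_subset_iff_below_deletion
  using correct_mono by blast

definition legal_label :: "(nat \<times> nat) set \<Rightarrow> (nat \<Rightarrow> label) \<Rightarrow> nat \<Rightarrow> label" where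
  "legal_label R L a =
     (if \<forall>b\<in>attackers R a. L b = Out then In
      else if \<exists>b\<in>attackers R a. L b = In then Out else Undec)"

fun label_cond :: "cond \<Rightarrow> label \<Rightarrow> label \<Rightarrow> bool" where
  "label_cond InTo l s = (l = In \<longrightarrow> s = In)"
| "label_cond InFrom l s = (s = In \<longrightarrow> l = In)"
| "label_cond OutTo l s = (l = Out \<longrightarrow> s = Out)"
| "label_cond OutFrom l s = (s = Out \<longrightarrow> l = Out)"
| "label_cond UndecTo l s = (l = Undec \<longrightarrow> s = Undec)"
| "label_cond UndecFrom l s = (s = Undec \<longrightarrow> l = Undec)"

lemma sat_cond_iff_label_cond:
  "sat_cond R L c a \<longleftrightarrow> label_cond c (L a) (legal_label R L a)"
proof -
  have "\<exists>b\<in>attackers R a. L b = Undec"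
    if "\<not> (\<forall>b\<in>attackers R a. L b = Out)" "\<forall>b\<in>attackers R a. L b \<noteq> In"
    using that label.exhaust by metis
  then show ?thesis
    by (cases c) (auto simp: legal_label_def)
qed

definition minimal_correct :: "cond set set" where
  "minimal_correct =
     {{InTo, OutTo, UndecTo}, {InFrom, OutFrom, UndecFrom}, {InTo, InFrom, OutTo, OutFrom},
      {OutTo, OutFrom, UndecTo, UndecFrom}, {InTo, InFrom, UndecTo, UndecFrom}}"

lemma label_eq_if_minimal_correct:
  assumes "M \<in> minimal_correct" and "\<forall>c\<in>M. label_cond c l s"
  shows "l = s"
  using assms by (cases l; cases s) (auto simp: minimal_correct_def)

lemma complete_lab_iff_legal:
  "complete_lab A R L \<longleftrightarrow> (\<forall>a\<in>A. L a = legal_label R L a)"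
proof -
  have "label_cond c l l" for c l by (cases c) auto
  moreover have "{InTo, OutTo, UndecTo} \<in> minimal_correct" by (simp add: minimal_correct_def)
  ultimately show ?thesis
    unfolding complete_lab_def satisfies_def sat_cond_iff_label_cond
    by (metis UNIV_I label_eq_if_minimal_correct)
qed

lemma correct_if_contains_minimal:
  assumes "M \<in> minimal_correct" and "M \<subseteq> C"
  shows "correct C"
  unfolding correct_def
proof (intro allI impI iffI)
  fix A R L
  assume "satisfies A R L C"
  then have "\<forall>c\<in>M. label_cond c (L a) (legal_label R L a)" if "a \<in> A" for a
    using that \<open>M \<subseteq> C\<close> by (auto simp: satisfies_def sat_cond_iff_label_cond)
  then show "complete_lab A R L"
    using label_eq_if_minimal_correct[OF \<open>M \<in> minimal_correct\<close>]
    by (simp add: complete_lab_iff_legal)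
qed (simp add: complete_lab_def satisfies_def)

definition maximal_weak :: "cond set set" where
  "maximal_weak =
     {{InFrom, OutTo, UndecTo, UndecFrom}, {InFrom, OutTo, OutFrom, UndecTo},
      {InTo, OutFrom, UndecTo, UndecFrom}, {InTo, InFrom, OutFrom, UndecTo},
      {InTo, OutTo, OutFrom, UndecFrom}, {InTo, InFrom, OutTo, UndecFrom}}"

lemma weakI:
  assumes "is_AF A R" "satisfies A R L C" "a \<in> A" "L a \<noteq> legal_label R L a"
  shows "weak C"
  using assms unfolding weak_def complete_lab_iff_legal by blast

lemma weak_if_maximal_weak:
  assumes "C \<in> maximal_weak"
  shows "weak C"
  using assms unfolding maximal_weak_def
proof (elim insertE emptyE)
  assume "C = {InFrom, OutTo, UndecTo, UndecFrom}"
  then show ?thesis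
    by (intro weakI[of "{0, 1}" "{(0, 1)}" "\<lambda>_. In" C 1])
      (simp_all add: is_AF_def satisfies_def attackers_def legal_label_def)
next
  assume "C = {InFrom, OutTo, OutFrom, UndecTo}"
  then show ?thesis
    by (intro weakI[of "{0, 1}" "{(0, 0), (0, 1)}" "\<lambda>x. if x = 0 then Undec else In" C 1])
      (simp_all add: is_AF_def satisfies_def attackers_def legal_label_def)
next
  assume "C = {InTo, OutFrom, UndecTo, UndecFrom}"
  then show ?thesis
    by (intro weakI[of "{0}" "{}" "\<lambda>_. Out" C 0])
      (simp_all add: is_AF_def satisfies_def attackers_def legal_label_def)
next
  assume "C = {InTo, InFrom, OutFrom, UndecTo}"
  then show ?thesis
    by (intro weakI[of "{0, 1}" "{(0, 0), (0, 1)}" "\<lambda>x. if x = 0 then Undec else Out" C 1])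
      (simp_all add: is_AF_def satisfies_def attackers_def legal_label_def)
next
  assume "C = {InTo, OutTo, OutFrom, UndecFrom}"
  then show ?thesis
    by (intro weakI[of "{0}" "{}" "\<lambda>_. Undec" C 0])
      (simp_all add: is_AF_def satisfies_def attackers_def legal_label_def)
next
  assume "C = {InTo, InFrom, OutTo, UndecFrom}"
  then show ?thesis
    by (intro weakI[of "{0, 1}" "{(0, 1)}" "\<lambda>x. if x = 0 then In else Undec" C 1])
      (simp_all add: is_AF_def satisfies_def attackers_def legal_label_def)
qed

lemma all_cond: "(\<forall>c. P c) \<longleftrightarrow> P InTo \<and> P InFrom \<and> P OutTo \<and> P OutFrom \<and> P UndecTo \<and> P UndecFrom"
  by (metis cond.exhaust)

lemma ex_cond: "(\<exists>c. P c) \<longleftrightarrow> P InTo \<or> P InFrom \<or> P OutTo \<or> P OutFrom \<or> P UndecTo \<or> P UndecFrom"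
  by (metis cond.exhaust)

lemma cond_set_ball_iff:
  "(\<forall>c\<in>C. P c) \<longleftrightarrow> (InTo \<in> C \<longrightarrow> P InTo) \<and> (InFrom \<in> C \<longrightarrow> P InFrom)
     \<and> (OutTo \<in> C \<longrightarrow> P OutTo) \<and> (OutFrom \<in> C \<longrightarrow> P OutFrom)
     \<and> (UndecTo \<in> C \<longrightarrow> P UndecTo) \<and> (UndecFrom \<in> C \<longrightarrow> P UndecFrom)"
  by (simp only: Ball_def all_cond)

lemma cond_set_bex_iff:
  "(\<exists>c\<in>C. P c) \<longleftrightarrow> (InTo \<in> C \<and> P InTo) \<or> (InFrom \<in> C \<and> P InFrom)
     \<or> (OutTo \<in> C \<and> P OutTo) \<or> (OutFrom \<in> C \<and> P OutFrom)
     \<or> (UndecTo \<in> C \<and> P UndecTo) \<or> (UndecFrom \<in> C \<and> P UndecFrom)"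
  by (simp only: Bex_def ex_cond)

lemma cond_set_eq_iff:
  "C = D \<longleftrightarrow> (InTo \<in> C \<longleftrightarrow> InTo \<in> D) \<and> (InFrom \<in> C \<longleftrightarrow> InFrom \<in> D)
     \<and> (OutTo \<in> C \<longleftrightarrow> OutTo \<in> D) \<and> (OutFrom \<in> C \<longleftrightarrow> OutFrom \<in> D)
     \<and> (UndecTo \<in> C \<longleftrightarrow> UndecTo \<in> D) \<and> (UndecFrom \<in> C \<longleftrightarrow> UndecFrom \<in> D)"
  by (simp only: set_eq_iff all_cond)

lemma cond_set_subset_iff:
  "C \<subseteq> D \<longleftrightarrow> (InTo \<in> C \<longrightarrow> InTo \<in> D) \<and> (InFrom \<in> C \<longrightarrow> InFrom \<in> D)
     \<and> (OutTo \<in> C \<longrightarrow> OutTo \<in> D) \<and> (OutFrom \<in> C \<longrightarrow> OutFrom \<in> D)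
     \<and> (UndecTo \<in> C \<longrightarrow> UndecTo \<in> D) \<and> (UndecFrom \<in> C \<longrightarrow> UndecFrom \<in> D)"
  by (simp only: subset_iff all_cond)

lemma card_cond_set:
  "card C = (if InTo \<in> C then 1 else 0) + (if InFrom \<in> C then 1 else 0) + (if OutTo \<in> C then 1 else 0)
     + (if OutFrom \<in> C then 1 else 0) + (if UndecTo \<in> C then 1 else 0) + (if UndecFrom \<in> C then 1 else 0)"
proof -
  have "card C = (\<Sum>c\<in>UNIV. if c \<in> C then 1 else 0)"
    by (simp add: sum.If_cases)
  then show ?thesis by (simp add: UNIV_cond)
qed

lemma subset_maximal_weak_if_no_minimal_correct:
  assumes "\<forall>M\<in>minimal_correct. \<not> M \<subseteq> C"
  shows "\<exists>W\<in>maximal_weak. C \<subseteq> W"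
  using assms unfolding minimal_correct_def maximal_weak_def
  by (simp add: cond_set_subset_iff) blast

lemma correct_iff_contains_minimal: "correct C \<longleftrightarrow> (\<exists>M\<in>minimal_correct. M \<subseteq> C)"
proof
  assume "correct C"
  show "\<exists>M\<in>minimal_correct. M \<subseteq> C"
  proof (rule ccontr)
    assume "\<not> (\<exists>M\<in>minimal_correct. M \<subseteq> C)"
    then obtain W where "W \<in> maximal_weak" "C \<subseteq> W"
      using subset_maximal_weak_if_no_minimal_correct by blast
    then have "weak C" using weak_if_maximal_weak weak_antimono by blast
    with \<open>correct C\<close> show False by (simp add: weak_iff_not_correct)
  qed
qed (use correct_if_contains_minimal in blast)

theorem corollary1:
  shows "(\<forall>C :: cond set. card C \<le> 2 \<longrightarrow> weak C)
   \<and> (\<forall>C :: cond set. card C = 3 \<longrightarrow>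
        ((C = {InTo, OutTo, UndecTo} \<or> C = {InFrom, OutFrom, UndecFrom}) \<longrightarrow> correct_nonredundant C)
      \<and> (\<not> (C = {InTo, OutTo, UndecTo} \<or> C = {InFrom, OutFrom, UndecFrom}) \<longrightarrow> weak C))
   \<and> (\<forall>C :: cond set. card C = 4 \<longrightarrow>
        ((C = {InTo, InFrom, OutTo, OutFrom} \<or> C = {OutTo, OutFrom, UndecTo, UndecFrom}
          \<or> C = {InTo, InFrom, UndecTo, UndecFrom}) \<longrightarrow> correct_nonredundant C)
      \<and> ((C = {UndecTo, UndecFrom, InTo, OutFrom} \<or> C = {UndecTo, UndecFrom, InFrom, OutTo}
          \<or> C = {OutTo, OutFrom, InTo, UndecFrom} \<or> C = {OutTo, OutFrom, InFrom, UndecTo}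
          \<or> C = {InTo, InFrom, OutTo, UndecFrom} \<or> C = {InTo, InFrom, OutFrom, UndecTo}) \<longrightarrow> weak C)
      \<and> (\<not> (C = {InTo, InFrom, OutTo, OutFrom} \<or> C = {OutTo, OutFrom, UndecTo, UndecFrom}
          \<or> C = {InTo, InFrom, UndecTo, UndecFrom}
          \<or> C = {UndecTo, UndecFrom, InTo, OutFrom} \<or> C = {UndecTo, UndecFrom, InFrom, OutTo}
          \<or> C = {OutTo, OutFrom, InTo, UndecFrom} \<or> C = {OutTo, OutFrom, InFrom, UndecTo}
          \<or> C = {InTo, InFrom, OutTo, UndecFrom} \<or> C = {InTo, InFrom, OutFrom, UndecTo})
         \<longrightarrow> redundant C))
   \<and> (\<forall>C :: cond set. card C \<ge> 5 \<longrightarrow> redundant C)"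
  unfolding weak_iff_not_correct correct_nonredundant_iff redundant_iff correct_iff_contains_minimal
    all_conj_distrib[symmetric]
  apply (rule allI)
  subgoal for C
    unfolding minimal_correct_def bex_simps(3,5) card_cond_set
    by (cases "InTo \<in> C"; cases "InFrom \<in> C"; cases "OutTo \<in> C"; cases "OutFrom \<in> C";
        cases "UndecTo \<in> C"; cases "UndecFrom \<in> C";
        simp add: cond_set_subset_iff cond_set_ball_iff cond_set_bex_iff cond_set_eq_iff)
  done

end
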